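(* Let $I$ be an irreducible numerical semigroup and $K\in\mathbb{N}$ such that $\mathrm{F}(I)+K$ is odd and $\mathrm{F}(I)\ge K+1$. Then $[\theta(I),I]$ contains at least one numerical semigroup $S$ with $\mathrm{l}(S)=K$ if and only if $\#(I\setminus\theta(I))\ge\lfloor K/2\rfloor$.
   Context: A numerical semigroup is a subset $S\subseteq\mathbb{N}$ closed under addition with $0\in S$ and $\mathbb{N}\setminus S$ finite; $\mathrm{F}(S)=\max(\mathbb{Z}\setminus S)$; $\langle X\rangle$ is the submonoid generated by $X$. Irreducible: not the intersection of two numerical semigroups properly containing it. $\mathrm{N}(S)=\{s\in S\mid s<\mathrm{F}(S)\}$, $\mathrm{L}(S)=\{x\in\mathbb{N}\setminus S\mid \mathrm{F}(S)-x\notin \mathrm{N}(S)\}$, $\mathrm{l}(S)=\#\mathrm{L}(S)$. $\Delta(S)=\{s\in S\mid s<\frac{\mathrm{F}(S)}{2}\}$, $\theta(S)=\langle\Delta(S)\rangle\cup\{\mathrm{F}(S)+1,\mathrm{F}(S)+2,\ldots\}$. $[A,B]$ is the set of numerical semigroups $X$ with $A\subseteq X\subseteq B$. *)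

theory Defs
  imports Main
begin

definition numerical_semigroup :: "nat set \<Rightarrow> bool" where
  "numerical_semigroup S \<longleftrightarrow> 0 \<in> S \<and> (\<forall>a\<in>S. \<forall>b\<in>S. a + b \<in> S) \<and> finite (UNIV - S)"

text \<open>Frobenius number: max of the integers not in S (negative integers are never in S), so -1 if S = N.\<close>
definition frob :: "nat set \<Rightarrow> int" where
  "frob S = (if S = UNIV then -1 else int (Max (UNIV - S)))"

definition irreducible_ns :: "nat set \<Rightarrow> bool" where
  "irreducible_ns S \<longleftrightarrow> numerical_semigroup S \<and>
     \<not> (\<exists>A B. numerical_semigroup A \<and> numerical_semigroup B \<and> S \<subset> A \<and> S \<subset> B \<and> S = A \<inter> B)"

inductive_set submonoid_gen :: "nat set \<Rightarrow> nat set" for X where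
  zero: "0 \<in> submonoid_gen X"
| add: "x \<in> X \<Longrightarrow> y \<in> submonoid_gen X \<Longrightarrow> x + y \<in> submonoid_gen X"

definition NS :: "nat set \<Rightarrow> nat set" where
  "NS S = {s \<in> S. int s < frob S}"

definition LS :: "nat set \<Rightarrow> nat set" where
  "LS S = {x. x \<notin> S \<and> \<not> (\<exists>n \<in> NS S. int n = frob S - int x)}"

definition lS :: "nat set \<Rightarrow> nat" where
  "lS S = card (LS S)"

definition Delta :: "nat set \<Rightarrow> nat set" where
  "Delta S = {s \<in> S. 2 * int s < frob S}"

definition theta :: "nat set \<Rightarrow> nat set" where
  "theta S = submonoid_gen (Delta S) \<union> {x. int x > frob S}"

definition ns_interval :: "nat set \<Rightarrow> nat set \<Rightarrow> nat set set" where
  "ns_interval A B = {X. numerical_semigroup X \<and> A \<subseteq> X \<and> X \<subseteq> B}"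

end

theory Submission
  imports Defs
begin

text \<open>An irreducible numerical semigroup I with Frobenius number f is symmetric or
  pseudo-symmetric: every gap x with 2x \<noteq> f has f - x \<in> I. Every S between \<theta>(I) and I
  has Frobenius number f, and the elements of I - S lie strictly between f/2 and f. Hence the gaps
  x of S for which f - x is also a gap are f/2 (when f is even), the elements of I - S and their
  reflections f - d, so that l(S) = [f even] + 2 #(I - S). Conversely, removing from I the m
  smallest elements of I - \<theta>(I) leaves a numerical semigroup, because a sum below f has a
  summand in \<Delta>(I). Since F(I) + K is odd, K \<equiv> [f even] (mod 2), and l(S) = K holds exactly
  when #(I - S) = \<lfloor>K/2\<rfloor>.\<close>

lemma ns_add: "numerical_semigroup S \<Longrightarrow> a \<in> S \<Longrightarrow> b \<in> S \<Longrightarrow> a + b \<in> S"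
  by (simp add: numerical_semigroup_def)

lemma ns_zero: "numerical_semigroup S \<Longrightarrow> 0 \<in> S"
  by (simp add: numerical_semigroup_def)

lemma ns_finite_gaps: "numerical_semigroup S \<Longrightarrow> finite (UNIV - S)"
  by (simp add: numerical_semigroup_def)

lemma frob_eq_int_iff:
  assumes S: "numerical_semigroup S"
  shows "frob S = int f \<longleftrightarrow> f \<notin> S \<and> (\<forall>x>f. x \<in> S)"
proof
  assume fr: "frob S = int f"
  then have "S \<noteq> UNIV" by (auto simp: frob_def)
  then have "f = Max (UNIV - S)" and "UNIV - S \<noteq> {}"
    using fr by (auto simp: frob_def)
  then show "f \<notin> S \<and> (\<forall>x>f. x \<in> S)"
    using Max_in[of "UNIV - S"] Max_ge[of "UNIV - S"] ns_finite_gaps[OF S]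
    by (meson DiffI Diff_iff UNIV_I not_le)
next
  assume f: "f \<notin> S \<and> (\<forall>x>f. x \<in> S)"
  then have "Max (UNIV - S) = f"
    using ns_finite_gaps[OF S] by (intro Max_eqI) (auto simp: not_less[symmetric])
  with f show "frob S = int f" by (auto simp: frob_def)
qed

lemma submonoid_gen_subset:
  assumes "numerical_semigroup S" "X \<subseteq> S"
  shows "submonoid_gen X \<subseteq> S"
proof
  fix x assume "x \<in> submonoid_gen X"
  then show "x \<in> S"
    by induct (use assms in \<open>auto simp: numerical_semigroup_def\<close>)
qed

lemma numerical_semigroup_insert:
  assumes S: "numerical_semigroup S" and "x + x \<in> S"
    and "\<And>s. s \<in> S \<Longrightarrow> s \<noteq> 0 \<Longrightarrow> x + s \<in> S"
  shows "numerical_semigroup (insert x S)"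
  unfolding numerical_semigroup_def
proof (intro conjI ballI)
  show "0 \<in> insert x S" using ns_zero[OF S] by simp
  show "finite (UNIV - insert x S)"
    using ns_finite_gaps[OF S] by (rule finite_subset[rotated]) auto
  fix a b assume "a \<in> insert x S" "b \<in> insert x S"
  then show "a + b \<in> insert x S"
    using assms ns_add[OF S] by (cases "a = 0"; cases "b = 0") (auto simp: add.commute)
qed

lemma irreducible_ns_gap_complement:
  assumes irr: "irreducible_ns I" and fr: "frob I = int f"
    and x: "x \<notin> I" "2 * x \<noteq> f"
  shows "f - x \<in> I"
proof (rule ccontr)
  assume "f - x \<notin> I"
  have ns: "numerical_semigroup I" using irr by (simp add: irreducible_ns_def)
  have f: "f \<notin> I" "\<And>y. f < y \<Longrightarrow> y \<in> I" using frob_eq_int_iff[OF ns] fr by auto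
  text \<open>The largest gap h whose reflection f - h is also a gap can be adjoined to I,
    and then I = (I \<union> {h}) \<inter> (I \<union> {f}) contradicts irreducibility.\<close>
  define P where "P = {y. y \<notin> I \<and> f - y \<notin> I \<and> 2 * y \<noteq> f}"
  have "finite P" using ns_finite_gaps[OF ns] by (rule finite_subset[rotated]) (auto simp: P_def)
  moreover have "x \<in> P" using x \<open>f - x \<notin> I\<close> by (simp add: P_def)
  ultimately obtain h where hP: "h \<in> P" and h_max: "\<And>y. y \<in> P \<Longrightarrow> y \<le> h"
    using Max_in Max_ge by (metis empty_iff)
  have "h \<le> f" using hP f(2) not_le by (auto simp: P_def)
  then have "f - h \<in> P" using hP by (auto simp: P_def)
  then have "f < 2 * h" using h_max[of "f - h"] hP by (auto simp: P_def)
  have "h \<noteq> f" using hP ns_zero[OF ns] by (auto simp: P_def)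
  have "h + s \<in> I" if s: "s \<in> I" "s \<noteq> 0" for s
  proof (rule ccontr)
    assume hs: "h + s \<notin> I"
    then have "h + s \<le> f" using f(2) not_le by blast
    moreover have "f - (h + s) + s = f - h" using \<open>h + s \<le> f\<close> by simp
    ultimately have "h + s \<in> P"
      using hs hP \<open>f < 2 * h\<close> ns_add[OF ns _ s(1), of "f - (h + s)"] by (auto simp: P_def)
    then show False using h_max s(2) by fastforce
  qed
  then have "numerical_semigroup (insert h I)"
    using \<open>f < 2 * h\<close> f(2) by (intro numerical_semigroup_insert[OF ns]) auto
  moreover have "numerical_semigroup (insert f I)"
    using f(1) ns_zero[OF ns] by (intro numerical_semigroup_insert[OF ns] f(2)) (auto intro: gr0I)
  moreover have "I = insert h I \<inter> insert f I" "I \<subset> insert h I" "I \<subset> insert f I"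
    using \<open>h \<noteq> f\<close> hP f(1) by (auto simp: P_def)
  ultimately show False using irr unfolding irreducible_ns_def by blast
qed

lemma ex_initial_subset_card:
  fixes E :: "nat set"
  assumes "finite E" "m \<le> card E"
  shows "\<exists>T \<subseteq> E. card T = m \<and> (\<forall>x\<in>T. \<forall>y\<in>E. y \<le> x \<longrightarrow> y \<in> T)"
  using assms(2)
proof (induction m)
  case 0 then show ?case by auto
next
  case (Suc m)
  then obtain T where T: "T \<subseteq> E" "card T = m" "\<forall>x\<in>T. \<forall>y\<in>E. y \<le> x \<longrightarrow> y \<in> T"
    by auto
  have "finite T" using T(1) assms(1) finite_subset by blast
  have "E - T \<noteq> {}"
    using card_mono[OF \<open>finite T\<close>, of E] T(2) Suc.prems by auto
  define M where "M = Min (E - T)"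
  have "finite (E - T)" using assms(1) by simp
  then have M: "M \<in> E - T" "\<And>y. y \<in> E - T \<Longrightarrow> M \<le> y"
    using Min_in[OF _ \<open>E - T \<noteq> {}\<close>] Min_le unfolding M_def by blast+
  have "\<forall>x\<in>insert M T. \<forall>y\<in>E. y \<le> x \<longrightarrow> y \<in> insert M T"
    using T(3) M(2) by (fastforce intro: le_trans)
  then show ?case
    using M(1) T \<open>finite T\<close> by (intro exI[of _ "insert M T"]) auto
qed

locale irreducible_with_frob =
  fixes I :: "nat set" and f :: nat
  assumes irreducible: "irreducible_ns I" and frob_I: "frob I = int f"
begin

lemma ns: "numerical_semigroup I"
  using irreducible by (simp add: irreducible_ns_def)

lemma frob_notin: "f \<notin> I" and above_frob: "f < x \<Longrightarrow> x \<in> I"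
  using frob_I frob_eq_int_iff[OF ns] by auto

lemma theta_eq: "theta I = submonoid_gen {s \<in> I. 2 * s < f} \<union> {x. f < x}"
proof -
  have "Delta I = {s \<in> I. 2 * s < f}" by (auto simp: Delta_def frob_I)
  then show ?thesis by (simp add: theta_def frob_I)
qed

lemma theta_subset: "theta I \<subseteq> I"
  using submonoid_gen_subset[OF ns, of "{s \<in> I. 2 * s < f}"] above_frob
  by (auto simp: theta_eq)

lemma small_add_theta: "a \<in> I \<Longrightarrow> 2 * a < f \<Longrightarrow> b \<in> theta I \<Longrightarrow> a + b \<in> theta I"
  by (auto simp: theta_eq intro: submonoid_gen.add)

lemma not_theta_bounds:
  assumes "x \<in> I" "x \<notin> theta I"
  shows "x < f" "f < 2 * x"
proof -
  show "x < f" using assms frob_notin by (cases x f rule: linorder_cases) (auto simp: theta_eq)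
  have "x + x \<noteq> f" using frob_notin ns_add[OF ns assms(1) assms(1)] by auto
  then show "f < 2 * x"
    using assms small_add_theta[OF assms(1), of 0]
    by (force simp: theta_eq intro: submonoid_gen.zero)
qed

lemma finite_not_theta: "finite (I - theta I)"
  by (rule finite_subset[of _ "{..<f}"]) (auto dest: not_theta_bounds)

lemma frob_summand_notin: "a + b = f \<Longrightarrow> a \<in> I \<Longrightarrow> b \<notin> I"
  using ns_add[OF ns, of a b] frob_notin by auto

lemma interval_above_frob:
  assumes "S \<in> ns_interval (theta I) I" "f < x"
  shows "x \<in> S"
  using assms by (auto simp: ns_interval_def theta_eq)

lemma frob_interval: "S \<in> ns_interval (theta I) I \<Longrightarrow> frob S = int f"
  using frob_eq_int_iff frob_notin interval_above_frob by (auto simp: ns_interval_def)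

lemma interval_removed_less_frob:
  "S \<in> ns_interval (theta I) I \<Longrightarrow> d \<in> I - S \<Longrightarrow> d < f"
  using not_theta_bounds by (auto simp: ns_interval_def)

lemma LS_interval:
  assumes S: "S \<in> ns_interval (theta I) I"
  shows "LS S = {x. x \<notin> S \<and> f - x \<notin> S}"
proof -
  have "(\<exists>n\<in>NS S. int n = int f - int x) \<longleftrightarrow> f - x \<in> S" if "x \<notin> S" for x
  proof -
    have "x \<le> f" using interval_above_frob[OF S] that not_le by blast
    moreover have "0 \<in> S" using S ns_zero by (simp add: ns_interval_def)
    then have "x \<noteq> 0" using that by metis
    moreover have "int n = int f - int x \<longleftrightarrow> n = f - x" for n using \<open>x \<le> f\<close> by auto
    ultimately show ?thesis by (auto simp: NS_def frob_interval[OF S])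
  qed
  then show ?thesis by (auto simp: LS_def frob_interval[OF S])
qed

text \<open>The inclusion from left to right is where the symmetry of I enters.\<close>
lemma gap_pairs_interval:
  assumes S: "S \<in> ns_interval (theta I) I"
  shows "{x. x \<notin> S \<and> f - x \<notin> S} = {x. 2 * x = f} \<union> (I - S) \<union> (\<lambda>d. f - d) ` (I - S)"
    (is "?G = ?C \<union> ?D \<union> ?D'")
proof (intro equalityI subsetI)
  fix x
  assume "x \<in> ?G"
  moreover have "x \<le> f" if "x \<notin> S" using interval_above_frob[OF S] that not_le by blast
  ultimately show "x \<in> ?C \<union> ?D \<union> ?D'"
    using irreducible_ns_gap_complement[OF irreducible frob_I, of x] by force
next
  have SI: "S \<subseteq> I" using S by (simp add: ns_interval_def)
  note lt = interval_removed_less_frob[OF S]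
  fix x
  assume "x \<in> ?C \<union> ?D \<union> ?D'"
  then consider "x + x = f" | "x \<in> I - S" | d where "d \<in> I - S" "x = f - d" by auto
  then show "x \<in> ?G"
  proof cases
    case 1
    then show ?thesis using frob_summand_notin[of x x] SI by auto
  next
    case 2
    then show ?thesis using frob_summand_notin[of x "f - x"] lt[of x] SI by auto
  next
    case 3
    then show ?thesis using frob_summand_notin[of d x] lt[of d] SI by auto
  qed
qed

lemma lS_interval:
  assumes S: "S \<in> ns_interval (theta I) I"
  shows "lS S = (if even f then 1 else 0) + 2 * card (I - S)"
proof -
  let ?C = "{x. 2 * x = f}" and ?D = "I - S"
  note lt = interval_removed_less_frob[OF S]
  have "?D \<subseteq> I - theta I" using S by (auto simp: ns_interval_def)
  then have fin: "finite ?D" using finite_not_theta finite_subset by blast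
  have "inj_on (\<lambda>d. f - d) ?D"
    using lt by (intro inj_onI) (metis diff_diff_cancel less_imp_le)
  moreover have "?D \<inter> (\<lambda>d. f - d) ` ?D = {}"
  proof (intro equals0I)
    fix x assume "x \<in> ?D \<inter> (\<lambda>d. f - d) ` ?D"
    then obtain d where "x \<in> ?D" "d \<in> ?D" "x = f - d" by blast
    then show False using frob_summand_notin[of x d] lt[of d] by auto
  qed
  ultimately have card_pairs: "card (?D \<union> (\<lambda>d. f - d) ` ?D) = 2 * card ?D"
    using fin by (simp add: card_Un_disjoint card_image)
  have "?C \<inter> (?D \<union> (\<lambda>d. f - d) ` ?D) = {}"
  proof (intro equals0I)
    fix x assume x: "x \<in> ?C \<inter> (?D \<union> (\<lambda>d. f - d) ` ?D)"
    then have "x \<notin> I" using frob_summand_notin[of x x] by auto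
    moreover have "x \<in> ?D"
    proof (cases "x \<in> ?D")
      case False
      then obtain d where d: "d \<in> ?D" "x = f - d" using x by auto
      then have "d = x" using lt[OF d(1)] x by auto
      then show ?thesis using d(1) by simp
    qed
    ultimately show False by blast
  qed
  moreover have "?C = (if even f then {f div 2} else {})" by auto
  ultimately show ?thesis
    unfolding lS_def LS_interval[OF S] gap_pairs_interval[OF S] Un_assoc
    using fin card_pairs by (simp add: card_Un_disjoint)
qed

lemma diff_initial_segment_in_interval:
  assumes T: "T \<subseteq> I - theta I"
    and initial: "\<forall>x\<in>T. \<forall>y\<in>I - theta I. y \<le> x \<longrightarrow> y \<in> T"
  shows "I - T \<in> ns_interval (theta I) I"
proof -
  text \<open>If a + b \<in> T then a + b < f, so some summand, say a, lies in \<Delta>(I). Then b \<notin> \<theta>(I),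
    since otherwise a + b \<in> \<theta>(I), and b \<le> a + b forces b into the initial segment T.\<close>
  have small_add: "u + v \<notin> T" if "u \<in> I - T" "v \<in> I - T" "2 * u < f" for u v
  proof
    assume uv: "u + v \<in> T"
    show False
    proof (cases "v \<in> theta I")
      case True
      then show False using small_add_theta[of u v] that uv T by auto
    next
      case False
      then show False using initial uv that by auto
    qed
  qed
  have "a + b \<in> I - T" if "a \<in> I - T" "b \<in> I - T" for a b
  proof (rule ccontr)
    assume "a + b \<notin> I - T"
    then have "a + b \<in> T" using ns_add[OF ns, of a b] that by auto
    then have "a + b < f" using T not_theta_bounds by auto
    then have "2 * a < f \<or> 2 * b < f" by auto
    then show False
      using small_add[of a b] small_add[of b a] that \<open>a + b \<in> T\<close> by (auto simp: add.commute)
  qed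
  moreover have "0 \<in> theta I" by (simp add: theta_eq submonoid_gen.zero)
  moreover have "finite (UNIV - (I - T))"
    using ns_finite_gaps[OF ns] finite_subset[OF T finite_not_theta]
    by (rule_tac finite_subset[of _ "(UNIV - I) \<union> T"]) auto
  ultimately show ?thesis
    using T theta_subset by (auto simp: ns_interval_def numerical_semigroup_def)
qed

end

theorem proposition39:
  fixes I :: "nat set" and K :: nat
  assumes "irreducible_ns I"
    and "odd (frob I + int K)"
    and "frob I \<ge> int K + 1"
  shows "(\<exists>S \<in> ns_interval (theta I) I. lS S = K) \<longleftrightarrow> card (I - theta I) \<ge> K div 2"
proof -
  define f where "f = nat (frob I)"
  have frob: "frob I = int f" using assms(3) by (simp add: f_def)
  interpret irreducible_with_frob I f using assms(1) frob by unfold_locales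
  have "odd (f + K)" using assms(2) unfolding frob by (metis even_of_nat of_nat_add)
  then have K_parity: "(if even f then 1 else 0) + 2 * (K div 2) = K" by presburger
  show ?thesis
  proof
    assume "\<exists>S \<in> ns_interval (theta I) I. lS S = K"
    then obtain S where S: "S \<in> ns_interval (theta I) I" "lS S = K" by blast
    have "card (I - S) = K div 2" using lS_interval[OF S(1)] S(2) by simp
    moreover have "card (I - S) \<le> card (I - theta I)"
      using S(1) finite_not_theta by (intro card_mono) (auto simp: ns_interval_def)
    ultimately show "K div 2 \<le> card (I - theta I)" by simp
  next
    assume "K div 2 \<le> card (I - theta I)"
    obtain T where T: "T \<subseteq> I - theta I" "card T = K div 2"
      "\<forall>x\<in>T. \<forall>y\<in>I - theta I. y \<le> x \<longrightarrow> y \<in> T"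
      using ex_initial_subset_card[OF finite_not_theta \<open>K div 2 \<le> card (I - theta I)\<close>] by blast
    then have T_interval: "I - T \<in> ns_interval (theta I) I"
      by (intro diff_initial_segment_in_interval)
    have "I - (I - T) = T" using T(1) by auto
    then have "lS (I - T) = K" using lS_interval[OF T_interval] T(2) K_parity by simp
    with T_interval show "\<exists>S \<in> ns_interval (theta I) I. lS S = K" by blast
  qed
qed

end
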